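(* Let $m\ge2$, $0\le i\le m-2$ (and, if $m$ is odd, $e_i\in\mathbb{C}$), and let $B_i(\mathbb{R}^m)=\{f\in L_1(\mathbb{R}^m):\int_{\mathbb{R}^m}(1+|\underline{y}|)^i|f(\underline{y})|\,dV(\underline{y})<\infty\}$ (so $B_0=L_1$). Then the integral transform $\mathcal{F}^i_{+,m}[f](\underline{y})=(2\pi)^{-m/2}\int_{\mathbb{R}^m}K^i_{+,m}(\underline{x},\underline{y})f(\underline{x})\,dV(\underline{x})$ is well-defined for $f\in B_i(\mathbb{R}^m)\otimes\mathcal{C}l_{0,m}$, and for such $f$ the function $\mathcal{F}^i_{+,m}[f]$ is continuous.
   Context: $\mathcal{C}l_{0,m}$ is the real Clifford algebra generated by $e_1,\dots,e_m$ with $e_je_k+e_ke_j=-2\delta_{jk}$; $\underline{x}=\sum_jx_je_j$, $\underline{x}\wedge\underline{y}=\sum_{j<k}e_je_k(x_jy_k-x_ky_j)$, $s=\langle\underline{x},\underline{y}\rangle$, $t=|\underline{x}\wedge\underline{y}|$, $\widetilde J_\alpha(t)=t^{-\alpha}J_\alpha(t)$. Put $\kappa_m=\sqrt{\pi/2}$, $\sigma_m=(-1)^{m/2}$ for $m$ even and $\kappa_m=1$, $\sigma_m=(-1)^{(m+1)/2}$ for $m$ odd, and $\tilde f_m^i=-\kappa_m\sum_{\ell=0}^{\lfloor (i-1)/2\rfloor}s^{i-1-2\ell}\frac{1}{2^\ell\ell!}\frac{\Gamma(i+1)}{\Gamma(i-2\ell)}\widetilde J_{(m-2\ell-3)/2}(t)$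 ($i\ge1$), $\tilde f_m^0:=0$; $\hat f_m^i=\sigma_m(-1)^i\kappa_m\sum_{\ell=0}^{\lfloor i/2\rfloor}s^{i-2\ell}\frac{1}{2^\ell\ell!}\frac{\Gamma(i+1)}{\Gamma(i+1-2\ell)}\widetilde J_{(m-2\ell-3)/2}(t)$; $g_m^i=\kappa_m\sum_{\ell=0}^{\lfloor i/2\rfloor}s^{i-2\ell}\frac{1}{2^\ell\ell!}\frac{\Gamma(i+1)}{\Gamma(i+1-2\ell)}\widetilde J_{(m-2\ell-1)/2}(t)$. For $m$ even $K^i_{+,m}=\tilde f_m^i+\hat f_m^i+(\underline{x}\wedge\underline{y})g_m^i$; for $m$ odd $K^i_{+,m}=e_i\tilde f_m^i+I\,e_i^c\,\hat f_m^i+(\underline{x}\wedge\underline{y})e_ig_m^i$, with $I$ the complex unit and $c$ complex conjugation. *)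

theory Defs
  imports "HOL-Analysis.Analysis"
begin

text \<open>The basis vectors e_j of Cl_{0,m} are indexed by the finite linearly ordered type 'n,
  with m = CARD('n).  A (complexified) Clifford number is given by its coefficients on the
  basis blades e_A = e_{j1} ... e_{jk} (A = {j1 < ... < jk}), i.e. a function 'n set => complex.
  Real Clifford numbers are functions 'n set => real.\<close>

type_synonym 'n clif = "'n set \<Rightarrow> complex"

text \<open>Sign in e_A e_B = sign A B e_{A symdiff B}, using e_j e_k = - e_k e_j (j ~= k) and e_j^2 = -1.\<close>
definition cl_sign :: "'n::{finite,linorder} set \<Rightarrow> 'n set \<Rightarrow> real" where
  "cl_sign A B = (-1) ^ (card {(a, b). a \<in> A \<and> b \<in> B \<and> b < a} + card (A \<inter> B))"

definition cl_mult :: "'n::{finite,linorder} clif \<Rightarrow> 'n clif \<Rightarrow> 'n clif" where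
  "cl_mult u v = (\<lambda>C. \<Sum>A\<in>UNIV. \<Sum>B\<in>UNIV.
      if (A - B) \<union> (B - A) = C then complex_of_real (cl_sign A B) * u A * v B else 0)"

definition cl_scalar :: "complex \<Rightarrow> 'n::{finite,linorder} clif" where
  "cl_scalar c = (\<lambda>A. if A = {} then c else 0)"

text \<open>x wedge y = sum_{j<k} e_j e_k (x_j y_k - x_k y_j); note e_j e_k = e_{{j,k}} for j < k.\<close>
definition wedge_coef :: "(real, 'n::{finite,linorder}) vec \<Rightarrow> (real, 'n) vec \<Rightarrow> 'n \<Rightarrow> 'n \<Rightarrow> real" where
  "wedge_coef x y j k = x$j * y$k - x$k * y$j"

definition wedge :: "(real, 'n::{finite,linorder}) vec \<Rightarrow> (real, 'n) vec \<Rightarrow> 'n clif" where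
  "wedge x y = (\<lambda>A. \<Sum>j\<in>UNIV. \<Sum>k\<in>UNIV.
      if j < k \<and> A = {j, k} then complex_of_real (wedge_coef x y j k) else 0)"

definition wedge_norm :: "(real, 'n::{finite,linorder}) vec \<Rightarrow> (real, 'n) vec \<Rightarrow> real" where
  "wedge_norm x y = sqrt (\<Sum>j\<in>UNIV. \<Sum>k\<in>UNIV. if j < k then (wedge_coef x y j k)^2 else 0)"

text \<open>tildeJ alpha t = t^(-alpha) J_alpha(t), written out via the power series of J_alpha,
  J_alpha(t) = sum_k (-1)^k / (k! Gamma(k+alpha+1)) (t/2)^(2k+alpha); this is the (entire)
  continuous extension, also at t = 0.\<close>
definition tildeJ :: "real \<Rightarrow> real \<Rightarrow> real" where
  "tildeJ \<alpha> t = (\<Sum>k. (-1) ^ k / (fact k * Gamma (real k + \<alpha> + 1)) * (t / 2) ^ (2 * k)) / 2 powr \<alpha>"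

definition kappa :: "nat \<Rightarrow> real" where
  "kappa m = (if even m then sqrt (pi / 2) else 1)"

definition sigma :: "nat \<Rightarrow> real" where
  "sigma m = (if even m then (-1) ^ (m div 2) else (-1) ^ ((m + 1) div 2))"

definition f_tilde :: "nat \<Rightarrow> nat \<Rightarrow> real \<Rightarrow> real \<Rightarrow> real" where
  "f_tilde m i s t = (if i = 0 then 0 else
     - kappa m * (\<Sum>l\<in>{0..(i - 1) div 2}. s ^ (i - 1 - 2 * l) * (1 / (2 ^ l * fact l))
        * (Gamma (real i + 1) / Gamma (real i - 2 * real l))
        * tildeJ ((real m - 2 * real l - 3) / 2) t))"

definition f_hat :: "nat \<Rightarrow> nat \<Rightarrow> real \<Rightarrow> real \<Rightarrow> real" where
  "f_hat m i s t = sigma m * (-1) ^ i * kappa m *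
     (\<Sum>l\<in>{0..i div 2}. s ^ (i - 2 * l) * (1 / (2 ^ l * fact l))
        * (Gamma (real i + 1) / Gamma (real i + 1 - 2 * real l))
        * tildeJ ((real m - 2 * real l - 3) / 2) t)"

definition g_fun :: "nat \<Rightarrow> nat \<Rightarrow> real \<Rightarrow> real \<Rightarrow> real" where
  "g_fun m i s t = kappa m *
     (\<Sum>l\<in>{0..i div 2}. s ^ (i - 2 * l) * (1 / (2 ^ l * fact l))
        * (Gamma (real i + 1) / Gamma (real i + 1 - 2 * real l))
        * tildeJ ((real m - 2 * real l - 1) / 2) t)"

text \<open>K^i_{+,m}(x,y) with m = CARD('n); the complex constant e (called e_i in the paper)
  only enters for m odd.\<close>
definition K_plus :: "nat \<Rightarrow> complex \<Rightarrow> (real, 'n::{finite,linorder}) vec \<Rightarrow> (real, 'n) vec \<Rightarrow> 'n clif" where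
  "K_plus i e x y =
    (let m = CARD('n); s = inner x y; t = wedge_norm x y in
     if even m then
       (\<lambda>A. cl_scalar (complex_of_real (f_tilde m i s t + f_hat m i s t)) A
            + complex_of_real (g_fun m i s t) * wedge x y A)
     else
       (\<lambda>A. cl_scalar (e * complex_of_real (f_tilde m i s t)
                        + \<i> * cnj e * complex_of_real (f_hat m i s t)) A
            + e * complex_of_real (g_fun m i s t) * wedge x y A))"

definition B_space :: "nat \<Rightarrow> ((real, 'n::{finite,linorder}) vec \<Rightarrow> real) set" where
  "B_space i = {g. integrable lborel g \<and>
                   integrable lborel (\<lambda>y. (1 + norm y) ^ i * \<bar>g y\<bar>)}"

definition F_plus :: "nat \<Rightarrow> complex \<Rightarrow> ((real, 'n::{finite,linorder}) vec \<Rightarrow> ('n set \<Rightarrow> real))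
                      \<Rightarrow> (real, 'n) vec \<Rightarrow> 'n clif" where
  "F_plus i e f y = (\<lambda>A. complex_of_real ((2 * pi) powr (- (real CARD('n) / 2))) *
      (\<integral>x. cl_mult (K_plus i e x y) (\<lambda>B. complex_of_real (f x B)) A \<partial>lborel))"

end

theory Submission
  imports Defs
begin

text \<open>Write tildeJ a t = P_a((t/2)^2) / 2^a with the entire series
  P_a(z) = sum_n (-1)^n z^n / (n! Gamma(n + a + 1)).  The identities P_a' = -P_(a+1) and
  z P_(a+2) = (a + 1) P_(a+1) - P_a show that the energy P_a(z)^2 + z P_(a+1)(z)^2 has derivative
  -(2a + 1) P_(a+1)(z)^2, so it is nonincreasing on z \<ge> 0 when a \<ge> -1/2.  Hence tildeJ a is
  bounded for a \<ge> -1/2, and t * tildeJ b t is bounded for b \<ge> 1/2.  The hypothesis i \<le> m - 2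
  keeps every Bessel order occurring in the kernel in these ranges; together with
  |\<langle>x,y\<rangle>| \<le> (1 + |x|)(1 + |y|) and |x \<and> y| \<le> m^2 t this bounds the kernel by
  D ((1 + |x|)(1 + |y|))^i.  For y in a bounded set the integrand is therefore dominated by a
  multiple of (1 + |x|)^i |f(x)|, which is integrable for f in B_i: this gives integrability, and
  continuity in y follows by dominated convergence.\<close>

section \<open>Bounds on the normalised Bessel functions\<close>

definition bessel_coeff :: "real \<Rightarrow> nat \<Rightarrow> real" where
  "bessel_coeff a n = (-1) ^ n / (fact n * Gamma (real n + a + 1))"

definition bessel_series :: "real \<Rightarrow> real \<Rightarrow> real" where
  "bessel_series a z = (\<Sum>n. bessel_coeff a n * z ^ n)"

lemma tildeJ_eq_bessel_series: "tildeJ a t = bessel_series a ((t / 2) ^ 2) / 2 powr a"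
  unfolding tildeJ_def bessel_series_def bessel_coeff_def by (simp add: power_mult)

lemma Gamma_real_plus1:
  fixes x :: real
  assumes "0 < x"
  shows "Gamma (x + 1) = x * Gamma x"
proof (rule Gamma_plus1)
  show "x \<notin> \<int>\<^sub>\<le>\<^sub>0"
    using assms nonpos_Ints_nonpos by fastforce
qed

lemma bessel_coeff_Suc:
  assumes "0 < real n + a + 1"
  shows "bessel_coeff a (Suc n) = - bessel_coeff a n / ((real n + 1) * (real n + a + 1))"
  using Gamma_real_plus1[OF assms] by (simp add: bessel_coeff_def field_simps)

lemma bessel_coeff_plus1:
  assumes "0 < real n + a + 1"
  shows "bessel_coeff (a + 1) n = bessel_coeff a n / (real n + a + 1)"
  using Gamma_real_plus1[OF assms] by (simp add: bessel_coeff_def field_simps)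

lemma summable_bessel_series: "summable (\<lambda>n. bessel_coeff a n * z ^ n)"
proof (rule summable_ratio_test[where c = "1/2" and N = "nat \<lceil>2 * \<bar>z\<bar>\<rceil> + nat \<lceil>\<bar>a\<bar>\<rceil> + 2"])
  fix n assume n: "nat \<lceil>2 * \<bar>z\<bar>\<rceil> + nat \<lceil>\<bar>a\<bar>\<rceil> + 2 \<le> n"
  then have pos: "1 \<le> real n + a + 1" and z: "2 * \<bar>z\<bar> \<le> real n + 1"
    by linarith+
  have "real n + 1 \<le> (real n + 1) * (real n + a + 1)"
    using mult_left_mono[OF pos, of "real n + 1"] by simp
  with z have "2 * \<bar>z\<bar> \<le> (real n + 1) * (real n + a + 1)"
    by linarith
  then have "\<bar>z\<bar> / ((real n + 1) * (real n + a + 1)) \<le> 1/2"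
    using pos by (simp add: divide_simps)
  then have "\<bar>z\<bar> / ((real n + 1) * (real n + a + 1)) * norm (bessel_coeff a n * z ^ n)
      \<le> 1/2 * norm (bessel_coeff a n * z ^ n)"
    by (rule mult_right_mono) simp
  moreover have "norm (bessel_coeff a (Suc n) * z ^ Suc n)
      = \<bar>z\<bar> / ((real n + 1) * (real n + a + 1)) * norm (bessel_coeff a n * z ^ n)"
    using pos by (simp add: bessel_coeff_Suc abs_mult abs_divide power_abs)
  ultimately show "norm (bessel_coeff a (Suc n) * z ^ Suc n) \<le> 1/2 * norm (bessel_coeff a n * z ^ n)"
    by simp
qed simp

lemma bessel_series_sums: "(\<lambda>n. bessel_coeff a n * z ^ n) sums bessel_series a z"
  unfolding bessel_series_def by (rule summable_sums[OF summable_bessel_series])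

lemma bessel_series_0: "bessel_series a 0 = 1 / Gamma (a + 1)"
  unfolding bessel_series_def powser_zero by (simp add: bessel_coeff_def)

lemma isCont_bessel_series: "isCont (bessel_series a) z"
  unfolding bessel_series_def[abs_def]
  by (rule isCont_powser_converges_everywhere[OF summable_bessel_series])

lemma diffs_bessel_coeff:
  assumes "-1 < a"
  shows "diffs (bessel_coeff a) = (\<lambda>n. - bessel_coeff (a + 1) n)"
proof
  fix n
  have pos: "0 < real n + a + 1" using assms by linarith
  show "diffs (bessel_coeff a) n = - bessel_coeff (a + 1) n"
    using pos by (simp add: diffs_def bessel_coeff_Suc bessel_coeff_plus1 add.commute[of 1])
qed

lemma bessel_series_has_derivative:
  assumes "-1 < a"
  shows "(bessel_series a has_real_derivative - bessel_series (a + 1) z) (at z)"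
proof -
  have "(bessel_series a has_real_derivative (\<Sum>n. diffs (bessel_coeff a) n * z ^ n)) (at z)"
    unfolding bessel_series_def[abs_def]
    by (rule termdiffs_strong_converges_everywhere[OF summable_bessel_series])
  also have "(\<Sum>n. diffs (bessel_coeff a) n * z ^ n) = - bessel_series (a + 1) z"
    unfolding diffs_bessel_coeff[OF assms] bessel_series_def
    using suminf_minus[OF summable_bessel_series[of "a + 1" z]] by simp
  finally show ?thesis .
qed

lemma bessel_coeff_recurrence:
  assumes "-1 < a"
  shows "(a + 1) * bessel_coeff (a + 1) (Suc n) - bessel_coeff a (Suc n) = bessel_coeff (a + 2) n"
proof -
  have pos: "0 < real n + a + 1" using assms by linarith
  have a2: "a + 2 = (a + 1) + 1" by simp
  have c2: "bessel_coeff (a + 2) n = bessel_coeff a n / ((real n + a + 1) * (real n + a + 2))"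
    unfolding a2 using pos bessel_coeff_plus1[of n "a + 1"] bessel_coeff_plus1[of n a]
    by (simp add: ac_simps)
  have c1: "bessel_coeff (a + 1) (Suc n) = bessel_coeff a (Suc n) / (real n + a + 2)"
    using pos bessel_coeff_plus1[of "Suc n" a] by (simp add: ac_simps)
  have "real n + 1 \<noteq> 0" "real n + a + 1 \<noteq> 0" "real n + a + 2 \<noteq> 0"
    using pos by linarith+
  then show ?thesis
    unfolding c1 c2 bessel_coeff_Suc[OF pos] by (simp add: divide_simps) (simp add: algebra_simps)
qed

lemma bessel_series_recurrence:
  assumes "-1 < a"
  shows "z * bessel_series (a + 2) z = (a + 1) * bessel_series (a + 1) z - bessel_series a z"
proof -
  define d where "d n = (a + 1) * (bessel_coeff (a + 1) n * z ^ n) - bessel_coeff a n * z ^ n" for n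
  have "d sums ((a + 1) * bessel_series (a + 1) z - bessel_series a z)"
    unfolding d_def by (intro sums_diff sums_mult bessel_series_sums)
  moreover have "d 0 = 0"
    using assms by (simp add: d_def bessel_coeff_plus1)
  ultimately have "(\<lambda>n. d (Suc n)) sums ((a + 1) * bessel_series (a + 1) z - bessel_series a z)"
    by (simp add: sums_Suc_iff)
  moreover have "d (Suc n) = bessel_coeff (a + 2) n * z ^ n * z" for n
    unfolding d_def bessel_coeff_recurrence[OF assms, symmetric] by (simp add: algebra_simps)
  moreover have "(\<lambda>n. bessel_coeff (a + 2) n * z ^ n * z) sums (bessel_series (a + 2) z * z)"
    by (rule sums_mult2[OF bessel_series_sums])
  ultimately show ?thesis
    by (simp add: sums_unique2 mult.commute)
qed

lemma bessel_series_energy_le: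
  assumes "-1/2 \<le> a" "0 \<le> z"
  shows "bessel_series a z ^ 2 + z * bessel_series (a + 1) z ^ 2 \<le> (1 / Gamma (a + 1)) ^ 2"
proof -
  have a: "-1 < a" "-1 < a + 1" using assms by simp_all
  define Q where "Q z = bessel_series a z ^ 2 + z * bessel_series (a + 1) z ^ 2" for z
  have Q': "(Q has_real_derivative - (2 * a + 1) * bessel_series (a + 1) x ^ 2) (at x)" for x
  proof -
    let ?P0 = "bessel_series a x" and ?P1 = "bessel_series (a + 1) x"
      and ?P2 = "bessel_series (a + 1 + 1) x"
    have dQ: "(Q has_real_derivative 2 * ?P0 * - ?P1 + (?P1 ^ 2 + x * (2 * ?P1 * - ?P2))) (at x)"
      unfolding Q_def
      by (auto intro!: derivative_eq_intros bessel_series_has_derivative[OF a(1)]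
          bessel_series_has_derivative[OF a(2)])
    have rec: "x * ?P2 = (a + 1) * ?P1 - ?P0"
      using bessel_series_recurrence[OF a(1), of x] by (simp add: add.assoc)
    have "2 * ?P0 * - ?P1 + (?P1 ^ 2 + x * (2 * ?P1 * - ?P2))
        = 2 * ?P0 * - ?P1 + ?P1 ^ 2 - 2 * ?P1 * (x * ?P2)"
      by (simp add: algebra_simps)
    also have "\<dots> = - (2 * a + 1) * ?P1 ^ 2"
      unfolding rec by (simp add: algebra_simps power2_eq_square)
    finally show ?thesis
      using dQ by simp
  qed
  have "Q z \<le> Q 0"
  proof (rule DERIV_nonpos_imp_nonincreasing[OF assms(2)])
    fix x
    have "- (2 * a + 1) * bessel_series (a + 1) x ^ 2 \<le> 0"
      using assms(1) by (intro mult_nonpos_nonneg) auto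
    with Q' show "\<exists>y. (Q has_real_derivative y) (at x) \<and> y \<le> 0"
      by blast
  qed
  then show ?thesis
    by (simp add: Q_def bessel_series_0 power_divide)
qed

lemma abs_tildeJ_le:
  assumes "-1/2 \<le> a"
  shows "\<bar>tildeJ a t\<bar> \<le> 1 / (Gamma (a + 1) * 2 powr a)"
proof -
  let ?z = "(t / 2) ^ 2"
  have "bessel_series a ?z ^ 2 \<le> (1 / Gamma (a + 1)) ^ 2"
    using bessel_series_energy_le[OF assms zero_le_power2[of "t / 2"]]
      mult_nonneg_nonneg[OF zero_le_power2 zero_le_power2, of "t / 2" "bessel_series (a + 1) ?z"]
    by linarith
  then have "\<bar>bessel_series a ?z\<bar> \<le> 1 / Gamma (a + 1)"
    using assms by (simp add: power2_le_iff_abs_le)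
  then have "\<bar>bessel_series a ?z\<bar> / 2 powr a \<le> 1 / Gamma (a + 1) / 2 powr a"
    by (rule divide_right_mono) simp
  then show ?thesis
    unfolding tildeJ_eq_bessel_series by (simp add: abs_divide)
qed

lemma abs_mult_tildeJ_le:
  assumes "1/2 \<le> b"
  shows "\<bar>t * tildeJ b t\<bar> \<le> 2 / (Gamma b * 2 powr b)"
proof -
  let ?z = "(t / 2) ^ 2"
  have "-1/2 \<le> b - 1" using assms by simp
  from bessel_series_energy_le[OF this zero_le_power2[of "t / 2"]]
  have "bessel_series (b - 1) ?z ^ 2 + ?z * bessel_series b ?z ^ 2 \<le> (1 / Gamma b) ^ 2"
    by simp
  then have "?z * bessel_series b ?z ^ 2 \<le> (1 / Gamma b) ^ 2"
    using zero_le_power2[of "bessel_series (b - 1) ?z"] by linarith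
  then have "(t / 2 * bessel_series b ?z) ^ 2 \<le> (1 / Gamma b) ^ 2"
    by (simp only: power_mult_distrib)
  then have "\<bar>t / 2 * bessel_series b ?z\<bar> \<le> 1 / Gamma b"
    using assms by (simp add: power2_le_iff_abs_le)
  then have "\<bar>t * bessel_series b ?z\<bar> \<le> 2 / Gamma b"
    by (simp add: abs_mult)
  then have "\<bar>t * bessel_series b ?z\<bar> / 2 powr b \<le> 2 / Gamma b / 2 powr b"
    by (rule divide_right_mono) simp
  then show ?thesis
    unfolding tildeJ_eq_bessel_series by (simp add: abs_divide abs_mult)
qed

lemma continuous_on_tildeJ [continuous_intros]:
  assumes "continuous_on S f"
  shows "continuous_on S (\<lambda>x. tildeJ a (f x))"
proof -
  have "continuous_on UNIV (bessel_series a)"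
    by (intro continuous_at_imp_continuous_on ballI isCont_bessel_series)
  then have "continuous_on S (\<lambda>x. bessel_series a ((f x / 2) ^ 2))"
    by (rule continuous_on_compose2) (auto intro!: continuous_intros assms)
  then show ?thesis
    unfolding tildeJ_eq_bessel_series by (intro continuous_intros) auto
qed

section \<open>Continuity and growth of the kernel\<close>

lemma continuous_on_if_const [continuous_intros]:
  "continuous_on S f \<Longrightarrow> continuous_on S g \<Longrightarrow> continuous_on S (\<lambda>z. if P then f z else g z)"
  by (cases P) auto

lemma continuous_on_wedge_norm [continuous_intros]:
  fixes X Y :: "'a::topological_space \<Rightarrow> (real, 'n::{finite,linorder}) vec"
  shows "continuous_on S X \<Longrightarrow> continuous_on S Y \<Longrightarrow> continuous_on S (\<lambda>z. wedge_norm (X z) (Y z))"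
  unfolding wedge_norm_def wedge_coef_def by (intro continuous_intros)

lemma continuous_on_wedge [continuous_intros]:
  fixes X Y :: "'a::topological_space \<Rightarrow> (real, 'n::{finite,linorder}) vec"
  shows "continuous_on S X \<Longrightarrow> continuous_on S Y \<Longrightarrow> continuous_on S (\<lambda>z. wedge (X z) (Y z) A)"
  unfolding wedge_def wedge_coef_def by (intro continuous_intros)

lemma continuous_on_f_tilde [continuous_intros]:
  "continuous_on S s \<Longrightarrow> continuous_on S t \<Longrightarrow> continuous_on S (\<lambda>z. f_tilde m i (s z) (t z))"
  unfolding f_tilde_def by (intro continuous_intros)

lemma continuous_on_f_hat [continuous_intros]:
  "continuous_on S s \<Longrightarrow> continuous_on S t \<Longrightarrow> continuous_on S (\<lambda>z. f_hat m i (s z) (t z))"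
  unfolding f_hat_def by (intro continuous_intros)

lemma continuous_on_g_fun [continuous_intros]:
  "continuous_on S s \<Longrightarrow> continuous_on S t \<Longrightarrow> continuous_on S (\<lambda>z. g_fun m i (s z) (t z))"
  unfolding g_fun_def by (intro continuous_intros)

lemma continuous_on_cl_scalar [continuous_intros]:
  "continuous_on S c \<Longrightarrow> continuous_on S (\<lambda>z. cl_scalar (c z) A)"
  unfolding cl_scalar_def by (intro continuous_intros)

lemma continuous_on_K_plus [continuous_intros]:
  fixes X Y :: "'a::topological_space \<Rightarrow> (real, 'n::{finite,linorder}) vec"
  shows "continuous_on S X \<Longrightarrow> continuous_on S Y \<Longrightarrow> continuous_on S (\<lambda>z. K_plus i e (X z) (Y z) A)"
  unfolding K_plus_def Let_def by (cases "even CARD('n)") (simp_all add: continuous_intros)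

lemma continuous_on_cl_mult [continuous_intros]:
  fixes u v :: "'a::topological_space \<Rightarrow> 'n::{finite,linorder} clif"
  shows "(\<And>A. continuous_on S (\<lambda>z. u z A)) \<Longrightarrow> (\<And>A. continuous_on S (\<lambda>z. v z A)) \<Longrightarrow>
    continuous_on S (\<lambda>z. cl_mult (u z) (v z) C)"
  unfolding cl_mult_def by (intro continuous_intros) auto

lemma abs_cl_sign: "\<bar>cl_sign A B\<bar> = 1"
  unfolding cl_sign_def by simp

lemma norm_cl_mult_le:
  fixes u v :: "'n::{finite,linorder} clif"
  assumes "\<And>A. norm (u A) \<le> M"
  shows "norm (cl_mult u v C) \<le> real (card (UNIV :: 'n set set)) * (M * (\<Sum>B\<in>UNIV. norm (v B)))"
proof -
  have "0 \<le> M" using assms[of "{}"] norm_ge_zero[of "u {}"] by linarith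
  then have "norm (if (A - B) \<union> (B - A) = C then complex_of_real (cl_sign A B) * u A * v B else 0)
      \<le> M * norm (v B)" for A B
    using assms[of A] by (simp add: norm_mult abs_cl_sign mult_right_mono)
  then have "norm (cl_mult u v C) \<le> (\<Sum>A\<in>(UNIV :: 'n set set). \<Sum>B\<in>UNIV. M * norm (v B))"
    unfolding cl_mult_def by (intro order_trans[OF norm_sum] sum_mono order_trans[OF norm_sum])
  then show ?thesis
    by (simp add: sum_distrib_left)
qed

lemma wedge_norm_nonneg: "0 \<le> wedge_norm x y"
  unfolding wedge_norm_def by (intro real_sqrt_ge_zero sum_nonneg) auto

lemma abs_wedge_coef_le_wedge_norm:
  fixes x y :: "(real, 'n::{finite,linorder}) vec"
  assumes "j < k"
  shows "\<bar>wedge_coef x y j k\<bar> \<le> wedge_norm x y"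
proof -
  let ?F = "\<lambda>j' k'. if j' < k' then (wedge_coef x y j' k') ^ 2 else 0"
  have "(wedge_coef x y j k) ^ 2 = ?F j k" using assms by simp
  also have "\<dots> \<le> (\<Sum>k'\<in>UNIV. ?F j k')"
    by (rule member_le_sum) auto
  also have "\<dots> \<le> (\<Sum>j'\<in>UNIV. \<Sum>k'\<in>UNIV. ?F j' k')"
    by (rule member_le_sum[of j UNIV "\<lambda>j'. \<Sum>k'\<in>UNIV. ?F j' k'"]) (auto intro!: sum_nonneg)
  finally show ?thesis
    unfolding wedge_norm_def by (intro real_le_rsqrt) simp
qed

lemma norm_wedge_le:
  fixes x y :: "(real, 'n::{finite,linorder}) vec"
  shows "norm (wedge x y A) \<le> real (CARD('n) * CARD('n)) * wedge_norm x y"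
proof -
  have "norm (wedge x y A) \<le> (\<Sum>j\<in>(UNIV :: 'n set). \<Sum>k\<in>(UNIV :: 'n set). wedge_norm x y)"
    unfolding wedge_def
    by (intro order_trans[OF norm_sum] sum_mono order_trans[OF norm_sum])
      (auto simp: abs_wedge_coef_le_wedge_norm wedge_norm_nonneg)
  then show ?thesis by simp
qed

lemma abs_sum_monomials_le:
  fixes s R :: real
  assumes "\<bar>s\<bar> \<le> R" "1 \<le> R" "\<And>l. l \<in> L \<Longrightarrow> d l \<le> i" "\<And>l. l \<in> L \<Longrightarrow> \<bar>J l\<bar> \<le> B l"
  shows "\<bar>\<Sum>l\<in>L. s ^ d l * c l * J l\<bar> \<le> (\<Sum>l\<in>L. \<bar>c l\<bar> * B l) * R ^ i"
proof -
  have "\<bar>s ^ d l * c l * J l\<bar> \<le> \<bar>c l\<bar> * B l * R ^ i" if "l \<in> L" for l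
  proof -
    have "\<bar>s\<bar> ^ d l \<le> R ^ d l" by (rule power_mono[OF assms(1)]) simp
    also have "\<dots> \<le> R ^ i" by (rule power_increasing[OF assms(3)[OF that] assms(2)])
    finally have "\<bar>s ^ d l\<bar> \<le> R ^ i" by (simp add: power_abs)
    moreover have "\<bar>c l * J l\<bar> \<le> \<bar>c l\<bar> * B l"
      unfolding abs_mult by (rule mult_left_mono[OF assms(4)[OF that]]) simp
    ultimately have "\<bar>s ^ d l\<bar> * \<bar>c l * J l\<bar> \<le> R ^ i * (\<bar>c l\<bar> * B l)"
      using assms(2) by (intro mult_mono) simp_all
    then show ?thesis
      by (simp add: abs_mult ac_simps)
  qed
  then have "\<bar>\<Sum>l\<in>L. s ^ d l * c l * J l\<bar> \<le> (\<Sum>l\<in>L. \<bar>c l\<bar> * B l * R ^ i)"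
    by (intro order_trans[OF sum_abs] sum_mono)
  then show ?thesis by (simp add: sum_distrib_right)
qed

lemma f_tilde_bounded:
  assumes "i + 2 \<le> m"
  obtains C where "\<And>s t R. \<bar>s\<bar> \<le> R \<Longrightarrow> 1 \<le> R \<Longrightarrow> \<bar>f_tilde m i s t\<bar> \<le> C * R ^ i"
proof (cases "i = 0")
  case True
  then show ?thesis by (intro that[of 0]) (simp add: f_tilde_def)
next
  case False
  let ?c = "\<lambda>l. 1 / (2 ^ l * fact l) * (Gamma (real i + 1) / Gamma (real i - 2 * real l))"
  let ?a = "\<lambda>l. (real m - 2 * real l - 3) / 2"
  show ?thesis
  proof (rule that[of "kappa m * (\<Sum>l\<in>{0..(i - 1) div 2}. \<bar>?c l\<bar> * (1 / (Gamma (?a l + 1) * 2 powr ?a l)))"])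
    fix s t R :: real
    assume "\<bar>s\<bar> \<le> R" "1 \<le> R"
    then have "\<bar>\<Sum>l\<in>{0..(i - 1) div 2}. s ^ (i - 1 - 2 * l) * ?c l * tildeJ (?a l) t\<bar>
        \<le> (\<Sum>l\<in>{0..(i - 1) div 2}. \<bar>?c l\<bar> * (1 / (Gamma (?a l + 1) * 2 powr ?a l))) * R ^ i"
      using assms by (intro abs_sum_monomials_le abs_tildeJ_le) auto
    then show "\<bar>f_tilde m i s t\<bar>
        \<le> kappa m * (\<Sum>l\<in>{0..(i - 1) div 2}. \<bar>?c l\<bar> * (1 / (Gamma (?a l + 1) * 2 powr ?a l))) * R ^ i"
      using False by (simp add: f_tilde_def abs_mult kappa_def mult.assoc)
  qed
qed

lemma f_hat_bounded:
  assumes "i + 2 \<le> m"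
  obtains C where "\<And>s t R. \<bar>s\<bar> \<le> R \<Longrightarrow> 1 \<le> R \<Longrightarrow> \<bar>f_hat m i s t\<bar> \<le> C * R ^ i"
proof -
  let ?c = "\<lambda>l. 1 / (2 ^ l * fact l) * (Gamma (real i + 1) / Gamma (real i + 1 - 2 * real l))"
  let ?a = "\<lambda>l. (real m - 2 * real l - 3) / 2"
  show ?thesis
  proof (rule that[of "kappa m * (\<Sum>l\<in>{0..i div 2}. \<bar>?c l\<bar> * (1 / (Gamma (?a l + 1) * 2 powr ?a l)))"])
    fix s t R :: real
    assume "\<bar>s\<bar> \<le> R" "1 \<le> R"
    then have "\<bar>\<Sum>l\<in>{0..i div 2}. s ^ (i - 2 * l) * ?c l * tildeJ (?a l) t\<bar>
        \<le> (\<Sum>l\<in>{0..i div 2}. \<bar>?c l\<bar> * (1 / (Gamma (?a l + 1) * 2 powr ?a l))) * R ^ i"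
      using assms by (intro abs_sum_monomials_le abs_tildeJ_le) auto
    then show "\<bar>f_hat m i s t\<bar>
        \<le> kappa m * (\<Sum>l\<in>{0..i div 2}. \<bar>?c l\<bar> * (1 / (Gamma (?a l + 1) * 2 powr ?a l))) * R ^ i"
      by (simp add: f_hat_def abs_mult kappa_def sigma_def mult.assoc)
  qed
qed

lemma g_fun_bounded:
  assumes "i + 2 \<le> m"
  obtains C where "\<And>s t R. \<bar>s\<bar> \<le> R \<Longrightarrow> 1 \<le> R \<Longrightarrow> \<bar>g_fun m i s t * t\<bar> \<le> C * R ^ i"
proof -
  let ?c = "\<lambda>l. 1 / (2 ^ l * fact l) * (Gamma (real i + 1) / Gamma (real i + 1 - 2 * real l))"
  let ?b = "\<lambda>l. (real m - 2 * real l - 1) / 2"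
  show ?thesis
  proof (rule that[of "kappa m * (\<Sum>l\<in>{0..i div 2}. \<bar>?c l\<bar> * (2 / (Gamma (?b l) * 2 powr ?b l)))"])
    fix s t R :: real
    assume "\<bar>s\<bar> \<le> R" "1 \<le> R"
    then have "\<bar>\<Sum>l\<in>{0..i div 2}. s ^ (i - 2 * l) * ?c l * (t * tildeJ (?b l) t)\<bar>
        \<le> (\<Sum>l\<in>{0..i div 2}. \<bar>?c l\<bar> * (2 / (Gamma (?b l) * 2 powr ?b l))) * R ^ i"
      using assms by (intro abs_sum_monomials_le abs_mult_tildeJ_le) auto
    moreover have "g_fun m i s t * t
        = kappa m * (\<Sum>l\<in>{0..i div 2}. s ^ (i - 2 * l) * ?c l * (t * tildeJ (?b l) t))"
      unfolding g_fun_def by (simp add: sum_distrib_left sum_distrib_right ac_simps)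
    ultimately show "\<bar>g_fun m i s t * t\<bar>
        \<le> kappa m * (\<Sum>l\<in>{0..i div 2}. \<bar>?c l\<bar> * (2 / (Gamma (?b l) * 2 powr ?b l))) * R ^ i"
      by (simp add: abs_mult kappa_def mult.assoc)
  qed
qed

lemma norm_cl_scalar_le: "norm (cl_scalar c A) \<le> norm c"
  unfolding cl_scalar_def by simp

lemma abs_mult_norm_wedge_le:
  fixes x y :: "(real, 'n::{finite,linorder}) vec"
  shows "\<bar>g\<bar> * norm (wedge x y A) \<le> real (CARD('n) * CARD('n)) * \<bar>g * wedge_norm x y\<bar>"
  using mult_left_mono[OF norm_wedge_le, of "\<bar>g\<bar>"] wedge_norm_nonneg[of x y]
  by (simp add: abs_mult ac_simps)

lemma norm_K_plus_even_le:
  fixes x y :: "(real, 'n::{finite,linorder}) vec"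
  defines "m \<equiv> CARD('n)" and "s \<equiv> x \<bullet> y" and "t \<equiv> wedge_norm x y"
  assumes "even m"
  shows "norm (K_plus i e x y A)
    \<le> \<bar>f_tilde m i s t\<bar> + \<bar>f_hat m i s t\<bar> + real (m * m) * \<bar>g_fun m i s t * t\<bar>"
proof -
  have "K_plus i e x y A = cl_scalar (complex_of_real (f_tilde m i s t + f_hat m i s t)) A
      + complex_of_real (g_fun m i s t) * wedge x y A"
    using assms(4) by (simp add: K_plus_def Let_def m_def s_def t_def)
  then have "norm (K_plus i e x y A)
      \<le> norm (cl_scalar (complex_of_real (f_tilde m i s t + f_hat m i s t)) A)
        + \<bar>g_fun m i s t\<bar> * norm (wedge x y A)"
    by (simp only:) (rule order_trans[OF norm_triangle_ineq], simp add: norm_mult)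
  then show ?thesis
    using norm_cl_scalar_le[of "complex_of_real (f_tilde m i s t + f_hat m i s t)" A]
      abs_triangle_ineq[of "f_tilde m i s t" "f_hat m i s t"]
      abs_mult_norm_wedge_le[of "g_fun m i s t" x y A]
    unfolding norm_of_real m_def t_def by linarith
qed

lemma norm_K_plus_odd_le:
  fixes x y :: "(real, 'n::{finite,linorder}) vec"
  defines "m \<equiv> CARD('n)" and "s \<equiv> x \<bullet> y" and "t \<equiv> wedge_norm x y"
  assumes "odd m"
  shows "norm (K_plus i e x y A)
    \<le> norm e * (\<bar>f_tilde m i s t\<bar> + \<bar>f_hat m i s t\<bar> + real (m * m) * \<bar>g_fun m i s t * t\<bar>)"
proof -
  let ?c = "e * complex_of_real (f_tilde m i s t) + \<i> * cnj e * complex_of_real (f_hat m i s t)"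
  have "K_plus i e x y A = cl_scalar ?c A + e * complex_of_real (g_fun m i s t) * wedge x y A"
    using assms(4) by (simp add: K_plus_def Let_def m_def s_def t_def)
  then have "norm (K_plus i e x y A)
      \<le> norm (cl_scalar ?c A) + norm e * (\<bar>g_fun m i s t\<bar> * norm (wedge x y A))"
    by (simp only:) (rule order_trans[OF norm_triangle_ineq], simp add: norm_mult)
  moreover have "norm (cl_scalar ?c A) \<le> norm e * \<bar>f_tilde m i s t\<bar> + norm e * \<bar>f_hat m i s t\<bar>"
    by (rule order_trans[OF norm_cl_scalar_le order_trans[OF norm_triangle_ineq]])
      (simp add: norm_mult)
  moreover have "norm e * (\<bar>g_fun m i s t\<bar> * norm (wedge x y A))
      \<le> norm e * (real (m * m) * \<bar>g_fun m i s t * t\<bar>)"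
    unfolding m_def t_def by (intro mult_left_mono abs_mult_norm_wedge_le norm_ge_zero)
  ultimately show ?thesis
    by (simp add: algebra_simps)
qed

lemma norm_K_plus_le:
  fixes x y :: "(real, 'n::{finite,linorder}) vec"
  defines "m \<equiv> CARD('n)" and "s \<equiv> x \<bullet> y" and "t \<equiv> wedge_norm x y"
  shows "norm (K_plus i e x y A) \<le> (1 + norm e) *
    (\<bar>f_tilde m i s t\<bar> + \<bar>f_hat m i s t\<bar> + real (m * m) * \<bar>g_fun m i s t * t\<bar>)"
    (is "_ \<le> _ * ?P")
proof -
  have "?P \<le> (1 + norm e) * ?P" "norm e * ?P \<le> (1 + norm e) * ?P"
    by (simp_all add: algebra_simps)
  then show ?thesis
    using norm_K_plus_even_le[of i e x y A] norm_K_plus_odd_le[of i e x y A]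
    unfolding m_def s_def t_def by (cases "even CARD('n)") auto
qed

lemma K_plus_polynomial_bound:
  assumes "i + 2 \<le> CARD('n::{finite,linorder})"
  obtains D where
    "\<And>(x :: (real, 'n) vec) y A. norm (K_plus i e x y A) \<le> D * ((1 + norm x) * (1 + norm y)) ^ i"
proof -
  let ?m = "CARD('n)"
  obtain C1 where C1: "\<And>s t R. \<bar>s\<bar> \<le> R \<Longrightarrow> 1 \<le> R \<Longrightarrow> \<bar>f_tilde ?m i s t\<bar> \<le> C1 * R ^ i"
    using f_tilde_bounded[OF assms] by blast
  obtain C2 where C2: "\<And>s t R. \<bar>s\<bar> \<le> R \<Longrightarrow> 1 \<le> R \<Longrightarrow> \<bar>f_hat ?m i s t\<bar> \<le> C2 * R ^ i"
    using f_hat_bounded[OF assms] by blast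
  obtain C3 where C3: "\<And>s t R. \<bar>s\<bar> \<le> R \<Longrightarrow> 1 \<le> R \<Longrightarrow> \<bar>g_fun ?m i s t * t\<bar> \<le> C3 * R ^ i"
    using g_fun_bounded[OF assms] by blast
  show ?thesis
  proof (rule that[of "(1 + norm e) * (\<bar>C1\<bar> + \<bar>C2\<bar> + real (?m * ?m) * \<bar>C3\<bar>)"])
    fix x y :: "(real, 'n) vec" and A
    let ?R = "(1 + norm x) * (1 + norm y)"
    have R: "\<bar>x \<bullet> y\<bar> \<le> ?R" "1 \<le> ?R"
      using Cauchy_Schwarz_ineq2[of x y] mult_mono[of "norm x" "1 + norm x" "norm y" "1 + norm y"]
        mult_mono[of 1 "1 + norm x" 1 "1 + norm y"]
      by auto
    have abs_C: "C * ?R ^ i \<le> \<bar>C\<bar> * ?R ^ i" for C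
      using R(2) by (intro mult_right_mono) auto
    have "\<bar>f_tilde ?m i (x \<bullet> y) (wedge_norm x y)\<bar> + \<bar>f_hat ?m i (x \<bullet> y) (wedge_norm x y)\<bar>
          + real (?m * ?m) * \<bar>g_fun ?m i (x \<bullet> y) (wedge_norm x y) * wedge_norm x y\<bar>
        \<le> \<bar>C1\<bar> * ?R ^ i + \<bar>C2\<bar> * ?R ^ i + real (?m * ?m) * (\<bar>C3\<bar> * ?R ^ i)"
      using order_trans[OF C1[OF R] abs_C] order_trans[OF C2[OF R] abs_C] order_trans[OF C3[OF R] abs_C]
      by (intro add_mono mult_left_mono) auto
    then have "norm (K_plus i e x y A)
        \<le> (1 + norm e) * (\<bar>C1\<bar> * ?R ^ i + \<bar>C2\<bar> * ?R ^ i + real (?m * ?m) * (\<bar>C3\<bar> * ?R ^ i))"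
      using norm_K_plus_le[of i e x y A] by (meson mult_left_mono norm_ge_zero order_trans add_nonneg_nonneg zero_le_one)
    then show "norm (K_plus i e x y A) \<le> (1 + norm e) * (\<bar>C1\<bar> + \<bar>C2\<bar> + real (?m * ?m) * \<bar>C3\<bar>) * ?R ^ i"
      by (simp add: algebra_simps)
  qed
qed

section \<open>Integral transforms with polynomially bounded kernels\<close>

lemma continuous_on_integral_dominated:
  fixes G :: "'a::real_normed_vector \<Rightarrow> 'b \<Rightarrow> 'c::{banach, second_countable_topology}"
  assumes meas: "\<And>y. G y \<in> borel_measurable M"
    and cont: "\<And>x. continuous_on UNIV (\<lambda>y. G y x)"
    and dom: "\<And>r. \<exists>w. integrable M w \<and> (\<forall>y x. norm y \<le> r \<longrightarrow> norm (G y x) \<le> w x)"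
  shows "continuous_on UNIV (\<lambda>y. \<integral>x. G y x \<partial>M)"
proof (rule continuous_at_imp_continuous_on, intro ballI continuous_at_sequentiallyI)
  fix y0 :: 'a and u :: "nat \<Rightarrow> 'a"
  assume u: "u \<longlonglongrightarrow> y0"
  then have "Bseq u" by (intro convergent_imp_Bseq convergentI)
  then obtain r where "\<And>n. norm (u n) \<le> r"
    unfolding Bseq_def by blast
  moreover obtain w where "integrable M w" "\<And>y x. norm y \<le> r \<Longrightarrow> norm (G y x) \<le> w x"
    using dom[of r] by blast
  moreover have "(\<lambda>n. G (u n) x) \<longlonglongrightarrow> G y0 x" for x
    using continuous_on_tendsto_compose[OF cont u] by simp
  ultimately show "(\<lambda>n. \<integral>x. G (u n) x \<partial>M) \<longlonglongrightarrow> \<integral>x. G y0 x \<partial>M"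
    by (intro integral_dominated_convergence[where w = w] meas always_eventually allI) auto
qed

context
  fixes K :: "(real, 'n::{finite,linorder}) vec \<Rightarrow> (real, 'n) vec \<Rightarrow> 'n clif"
    and f :: "(real, 'n) vec \<Rightarrow> 'n set \<Rightarrow> real" and D :: real and i :: nat
  assumes K_bound: "\<And>x y A. norm (K x y A) \<le> D * ((1 + norm x) * (1 + norm y)) ^ i"
    and continuous_K: "\<And>y A. continuous_on UNIV (\<lambda>x. K x y A)"
    and f_B_space: "\<And>B. (\<lambda>x. f x B) \<in> B_space i"
begin

definition kernel_majorant :: "real \<Rightarrow> (real, 'n) vec \<Rightarrow> real" where
  "kernel_majorant r x = real (card (UNIV :: 'n set set)) * (D * (1 + r) ^ i *
    (\<Sum>B\<in>UNIV. (1 + norm x) ^ i * \<bar>f x B\<bar>))"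

lemma integrable_kernel_majorant: "integrable lborel (kernel_majorant r)"
  using f_B_space unfolding kernel_majorant_def B_space_def
  by (intro integrable_mult_right Bochner_Integration.integrable_sum) auto

lemma norm_kernel_integrand_le:
  assumes "norm y \<le> r"
  shows "norm (cl_mult (K x y) (\<lambda>B. complex_of_real (f x B)) A) \<le> kernel_majorant r x"
proof -
  have "0 \<le> D"
    using order_trans[OF norm_ge_zero K_bound[of 0 0 A]] by simp
  moreover have "(1 + norm y) ^ i \<le> (1 + r) ^ i"
    using assms by (intro power_mono) auto
  ultimately have "D * ((1 + norm x) * (1 + norm y)) ^ i \<le> D * ((1 + norm x) ^ i * (1 + r) ^ i)"
    unfolding power_mult_distrib by (intro mult_left_mono) auto
  then have "norm (K x y A') \<le> D * (1 + r) ^ i * (1 + norm x) ^ i" for A'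
    using K_bound[of x y A'] by (simp add: mult_ac)
  from norm_cl_mult_le[of "K x y", OF this, of "\<lambda>B. complex_of_real (f x B)" A]
  show ?thesis
    by (simp add: kernel_majorant_def sum_distrib_left mult_ac)
qed

lemma borel_measurable_kernel_integrand:
  "(\<lambda>x. cl_mult (K x y) (\<lambda>B. complex_of_real (f x B)) A) \<in> borel_measurable lborel"
proof -
  have "(\<lambda>x. K x y A') \<in> borel_measurable borel" for A'
    by (intro borel_measurable_continuous_onI continuous_K)
  moreover have "(\<lambda>x. f x B) \<in> borel_measurable lborel" for B
    using f_B_space[of B] unfolding B_space_def by auto
  ultimately show ?thesis
    unfolding cl_mult_def by measurable
qed

lemma integrable_kernel_integrand:
  "integrable lborel (\<lambda>x. cl_mult (K x y) (\<lambda>B. complex_of_real (f x B)) A)"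
proof (rule Bochner_Integration.integrable_bound[OF integrable_kernel_majorant
      borel_measurable_kernel_integrand])
  show "AE x in lborel. norm (cl_mult (K x y) (\<lambda>B. complex_of_real (f x B)) A)
      \<le> norm (kernel_majorant (norm y) x)"
    unfolding real_norm_def
    by (intro always_eventually allI order_trans[OF norm_kernel_integrand_le abs_ge_self]) simp
qed

lemma continuous_on_kernel_integral:
  assumes "\<And>x A. continuous_on UNIV (\<lambda>y. K x y A)"
  shows "continuous_on UNIV (\<lambda>y. \<integral>x. cl_mult (K x y) (\<lambda>B. complex_of_real (f x B)) A \<partial>lborel)"
  using integrable_kernel_majorant norm_kernel_integrand_le
  by (intro continuous_on_integral_dominated borel_measurable_kernel_integrand continuous_intros assms)
    blast

end

theorem theorem6p2:
  fixes f :: "(real, 'n::{finite,linorder}) vec \<Rightarrow> ('n set \<Rightarrow> real)"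
    and i :: nat and e :: complex
  assumes "CARD('n) \<ge> 2"
    and "i \<le> CARD('n) - 2"
    and "\<forall>A. (\<lambda>x. f x A) \<in> B_space i"
  shows "(\<forall>y A. integrable lborel
             (\<lambda>x. cl_mult (K_plus i e x y) (\<lambda>B. complex_of_real (f x B)) A))
         \<and> (\<forall>A. continuous_on UNIV (\<lambda>y. F_plus i e f y A))"
proof -
  have "i + 2 \<le> CARD('n)" using assms(1,2) by linarith
  then obtain D where K: "\<And>(x :: (real, 'n) vec) y A.
      norm (K_plus i e x y A) \<le> D * ((1 + norm x) * (1 + norm y)) ^ i"
    using K_plus_polynomial_bound[where e = e] by blast
  have f: "\<And>B. (\<lambda>x. f x B) \<in> B_space i" using assms(3) by blast
  have "continuous_on UNIV (\<lambda>x. K_plus i e x y A)" "continuous_on UNIV (\<lambda>y. K_plus i e x y A)"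
    for x y :: "(real, 'n) vec" and A
    by (intro continuous_intros)+
  with K f show ?thesis
    unfolding F_plus_def
    by (auto intro!: integrable_kernel_integrand continuous_on_kernel_integral continuous_intros)
qed

end
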